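(* Let $S$ be a subcartesian space, $\mathfrak{a}$ a locally complete Lie subalgebra of $\mathrm{Vect}(S)$, and $\mu\in\check\Omega^k_{\mathfrak{a}}(S)$. Then for each $x\in S$ there exist a chart $\varphi:V\to\tilde V\subseteq\mathbb{R}^n$ about $x$ and a differential form $\tilde\mu\in\Omega^k(\mathbb{R}^n)$ such that $\mu|_V=\varphi^*\tilde\mu$, i.e. $\mu(v_1\wedge\dots\wedge v_k)=\tilde\mu_{\varphi(y)}(\varphi_*v_1,\dots,\varphi_*v_k)$ for all $y\in V$ and $v_1,\dots,v_k\in\check T^{\mathfrak{a}}_yS$.
   Context: A subcartesian space is a paracompact, second-countable, Hausdorff differential space $(S,C^\infty(S))$ in which each point has a chart, i.e. an open neighbourhood $U$ and a diffeomorphism $\varphi:U\to\tilde U$ onto a differential subspace of some $\mathbb{R}^n$. $T_yS$ is the space of derivations at $y$ (linear $v:C^\infty(S)\to\mathbb{R}$ with $v(fg)=f(y)v(g)+g(y)v(f)$); for a chart, $\varphi_*v\in T_{\varphi(y)}\mathbb{R}^n$ is $(\varphi_*v)(g)=v(g\circ\varphi)$. Vector fields are derivations $X$ of $C^\infty(S)$ whose maximal integral curves form a local flow with open domain; $\mathrm{Vect}(S)$ is the set of them. A family $\mathcal{F}$ of vector fields is locally complete if for $X,Y\in\mathcal{F}$, $x\in S$, $t\in\mathbb{R}$ with $(\exp(tX)_*Y)|_x$ defined, there is a neighbourhood $U$ of $x$ and $Z\in\mathcal{F}$ with $(\exp(tX)_*Y)|_U=Z|_U$. $\check T^{\mathfrak{a}}_yS$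 is the linear span of $\{X|_y: X\in\mathfrak{a}\}$. An $\mathfrak{a}$-orbital $k$-form is a function $\mu$ on $\bigwedge^k_S\check T^{\mathfrak{a}}S=\bigsqcup_{y}\bigwedge^k\check T^{\mathfrak{a}}_yS$, linear on each fibre, which is smooth: each point has a chart $\varphi:U\to\tilde U\subseteq\mathbb{R}^n$ and a smooth function $f$ on $\bigwedge^kT\mathbb{R}^n$ with $\mu=f\circ\bigwedge^k\varphi_*$ over $U$. $\check\Omega^k_{\mathfrak{a}}(S)$ denotes the set of these. *)

theory Defs
  imports "HOL-Analysis.Analysis" "HOL-Combinatorics.Permutations"
begin

text \<open>R^n is modelled as the vectors nat => real vanishing from index n on
  (product topology = Euclidean topology there).\<close>

definition Rn :: "nat \<Rightarrow> (nat \<Rightarrow> real) set" where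
  "Rn n = {x. \<forall>i\<ge>n. x i = 0}"

coinductive smooth_Rn :: "nat \<Rightarrow> ((nat \<Rightarrow> real) \<Rightarrow> real) \<Rightarrow> bool" for n where
  "continuous_on (Rn n) g \<Longrightarrow>
   (\<And>i. i < n \<Longrightarrow> \<exists>D. (\<forall>x\<in>Rn n. ((\<lambda>t. g (x(i := x i + t))) has_real_derivative D x) (at 0))
                        \<and> smooth_Rn n D) \<Longrightarrow>
   smooth_Rn n g"

definition vanish_off :: "'a set \<Rightarrow> ('a \<Rightarrow> real) \<Rightarrow> bool" where
  "vanish_off A f \<longleftrightarrow> (\<forall>x. x \<notin> A \<longrightarrow> f x = 0)"

text \<open>Functions of a differential space (S,C) are represented as functions vanishing off S.\<close>

definition dtop :: "'a set \<Rightarrow> ('a \<Rightarrow> real) set \<Rightarrow> 'a topology" where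
  "dtop S C = topology_generated_by {{x\<in>S. f x \<in> W} | f W. f \<in> C \<and> open W}"

definition differential_space :: "'a set \<Rightarrow> ('a \<Rightarrow> real) set \<Rightarrow> bool" where
  "differential_space S C \<longleftrightarrow>
     (\<forall>f\<in>C. vanish_off S f) \<and>
     (\<forall>n G fs. smooth_Rn n G \<and> (\<forall>i<n. fs i \<in> C) \<longrightarrow>
        (\<lambda>x. if x \<in> S then G (\<lambda>i. if i < n then fs i x else 0) else 0) \<in> C) \<and>
     (\<forall>f. vanish_off S f \<and>
        (\<forall>x\<in>S. \<exists>U. openin (dtop S C) U \<and> x \<in> U \<and> (\<exists>g\<in>C. \<forall>y\<in>U. f y = g y))
        \<longrightarrow> f \<in> C)"

definition subspace_fns :: "'a set \<Rightarrow> ('a \<Rightarrow> real) set \<Rightarrow> 'a set \<Rightarrow> ('a \<Rightarrow> real) set" where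
  "subspace_fns S C A = {f. vanish_off A f \<and>
     (\<forall>x\<in>A. \<exists>U. openin (dtop S C) U \<and> x \<in> U \<and> (\<exists>g\<in>C. \<forall>y\<in>U \<inter> A. f y = g y))}"

definition Rn_fns :: "nat \<Rightarrow> ((nat \<Rightarrow> real) \<Rightarrow> real) set" where
  "Rn_fns n = {g. vanish_off (Rn n) g \<and> smooth_Rn n g}"

definition diffeo :: "'a set \<Rightarrow> ('a \<Rightarrow> real) set \<Rightarrow> 'b set \<Rightarrow> ('b \<Rightarrow> real) set \<Rightarrow> ('a \<Rightarrow> 'b) \<Rightarrow> bool" where
  "diffeo A CA B CB \<phi> \<longleftrightarrow> bij_betw \<phi> A B \<and>
     (\<forall>g. vanish_off B g \<longrightarrow> (g \<in> CB \<longleftrightarrow> (\<lambda>y. if y \<in> A then g (\<phi> y) else 0) \<in> CA))"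

definition chart :: "'a set \<Rightarrow> ('a \<Rightarrow> real) set \<Rightarrow> 'a set \<Rightarrow> ('a \<Rightarrow> nat \<Rightarrow> real) \<Rightarrow> nat \<Rightarrow> bool" where
  "chart S C U \<phi> n \<longleftrightarrow> openin (dtop S C) U \<and> \<phi> ` U \<subseteq> Rn n \<and>
     diffeo U (subspace_fns S C U) (\<phi> ` U) (subspace_fns (Rn n) (Rn_fns n) (\<phi> ` U)) \<phi>"

definition paracompact_space :: "'a topology \<Rightarrow> bool" where
  "paracompact_space X \<longleftrightarrow> (\<forall>\<U>. (\<forall>U\<in>\<U>. openin X U) \<and> \<Union>\<U> = topspace X \<longrightarrow>
     (\<exists>\<V>. (\<forall>V\<in>\<V>. openin X V) \<and> \<Union>\<V> = topspace X \<and> (\<forall>V\<in>\<V>. \<exists>U\<in>\<U>. V \<subseteq> U) \<and>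
          (\<forall>x\<in>topspace X. \<exists>W. openin X W \<and> x \<in> W \<and> finite {V\<in>\<V>. V \<inter> W \<noteq> {}})))"

definition subcartesian :: "'a set \<Rightarrow> ('a \<Rightarrow> real) set \<Rightarrow> bool" where
  "subcartesian S C \<longleftrightarrow> differential_space S C \<and> Hausdorff_space (dtop S C) \<and>
     second_countable (dtop S C) \<and> paracompact_space (dtop S C) \<and>
     (\<forall>x\<in>S. \<exists>U \<phi> n. x \<in> U \<and> chart S C U \<phi> n)"

definition derivation :: "'a set \<Rightarrow> ('a \<Rightarrow> real) set \<Rightarrow> (('a \<Rightarrow> real) \<Rightarrow> ('a \<Rightarrow> real)) \<Rightarrow> bool" where
  "derivation S C X \<longleftrightarrow> (\<forall>f. f \<notin> C \<longrightarrow> X f = (\<lambda>_. 0)) \<and> (\<forall>f\<in>C. X f \<in> C) \<and>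
     (\<forall>f\<in>C. \<forall>g\<in>C. X (\<lambda>x. f x + g x) = (\<lambda>x. X f x + X g x) \<and>
                   X (\<lambda>x. f x * g x) = (\<lambda>x. f x * X g x + g x * X f x)) \<and>
     (\<forall>c. \<forall>f\<in>C. X (\<lambda>x. c * f x) = (\<lambda>x. c * X f x))"

definition vat :: "('a \<Rightarrow> real) set \<Rightarrow> (('a \<Rightarrow> real) \<Rightarrow> ('a \<Rightarrow> real)) \<Rightarrow> 'a \<Rightarrow> ('a \<Rightarrow> real) \<Rightarrow> real" where
  "vat C X y = (\<lambda>f. if f \<in> C then X f y else 0)"

definition int_curve :: "'a set \<Rightarrow> ('a \<Rightarrow> real) set \<Rightarrow> (('a \<Rightarrow> real) \<Rightarrow> ('a \<Rightarrow> real)) \<Rightarrow> 'a \<Rightarrow> real set \<Rightarrow> (real \<Rightarrow> 'a) \<Rightarrow> bool" where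
  "int_curve S C X x I c \<longleftrightarrow> is_interval I \<and> 0 \<in> I \<and> c 0 = x \<and> c ` I \<subseteq> S \<and>
     (\<forall>f\<in>C. \<forall>t\<in>I. ((\<lambda>s. f (c s)) has_real_derivative X f (c t)) (at t within I))"

definition max_int_curve :: "'a set \<Rightarrow> ('a \<Rightarrow> real) set \<Rightarrow> (('a \<Rightarrow> real) \<Rightarrow> ('a \<Rightarrow> real)) \<Rightarrow> 'a \<Rightarrow> real set \<Rightarrow> (real \<Rightarrow> 'a) \<Rightarrow> bool" where
  "max_int_curve S C X x I c \<longleftrightarrow> int_curve S C X x I c \<and>
     (\<forall>J d. int_curve S C X x J d \<longrightarrow> J \<subseteq> I \<and> (\<forall>t\<in>J. d t = c t))"

definition flow_dom :: "'a set \<Rightarrow> ('a \<Rightarrow> real) set \<Rightarrow> (('a \<Rightarrow> real) \<Rightarrow> ('a \<Rightarrow> real)) \<Rightarrow> 'a \<Rightarrow> real set" where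
  "flow_dom S C X x = (THE I. \<exists>c. max_int_curve S C X x I c)"

definition flow :: "'a set \<Rightarrow> ('a \<Rightarrow> real) set \<Rightarrow> (('a \<Rightarrow> real) \<Rightarrow> ('a \<Rightarrow> real)) \<Rightarrow> real \<Rightarrow> 'a \<Rightarrow> 'a" where
  "flow S C X t x = (SOME c. max_int_curve S C X x (flow_dom S C X x) c) t"

definition flow_domain :: "'a set \<Rightarrow> ('a \<Rightarrow> real) set \<Rightarrow> (('a \<Rightarrow> real) \<Rightarrow> ('a \<Rightarrow> real)) \<Rightarrow> (real \<times> 'a) set" where
  "flow_domain S C X = {(t, x). x \<in> S \<and> t \<in> flow_dom S C X x}"

definition slice :: "'a set \<Rightarrow> ('a \<Rightarrow> real) set \<Rightarrow> (('a \<Rightarrow> real) \<Rightarrow> ('a \<Rightarrow> real)) \<Rightarrow> real \<Rightarrow> 'a set" where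
  "slice S C X t = {x \<in> S. t \<in> flow_dom S C X x}"

definition vector_field :: "'a set \<Rightarrow> ('a \<Rightarrow> real) set \<Rightarrow> (('a \<Rightarrow> real) \<Rightarrow> ('a \<Rightarrow> real)) \<Rightarrow> bool" where
  "vector_field S C X \<longleftrightarrow> derivation S C X \<and>
     (\<forall>x\<in>S. \<exists>I c. max_int_curve S C X x I c) \<and>
     openin (prod_topology euclideanreal (dtop S C)) (flow_domain S C X) \<and>
     (\<forall>t. openin (dtop S C) (slice S C X t) \<and>
          diffeo (slice S C X t) (subspace_fns S C (slice S C X t))
                 (slice S C X (-t)) (subspace_fns S C (slice S C X (-t))) (flow S C X t))"

definition Vect :: "'a set \<Rightarrow> ('a \<Rightarrow> real) set \<Rightarrow> (('a \<Rightarrow> real) \<Rightarrow> ('a \<Rightarrow> real)) set" where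
  "Vect S C = {X. vector_field S C X}"

definition lie_subalgebra :: "'a set \<Rightarrow> ('a \<Rightarrow> real) set \<Rightarrow> (('a \<Rightarrow> real) \<Rightarrow> ('a \<Rightarrow> real)) set \<Rightarrow> bool" where
  "lie_subalgebra S C A \<longleftrightarrow> A \<subseteq> Vect S C \<and> (\<lambda>f. \<lambda>_. 0) \<in> A \<and>
     (\<forall>X\<in>A. \<forall>Y\<in>A. (\<lambda>f. \<lambda>x. X f x + Y f x) \<in> A) \<and>
     (\<forall>X\<in>A. \<forall>c. (\<lambda>f. \<lambda>x. c * X f x) \<in> A) \<and>
     (\<forall>X\<in>A. \<forall>Y\<in>A. (\<lambda>f. if f \<in> C then (\<lambda>x. X (Y f) x - Y (X f) x) else (\<lambda>_. 0)) \<in> A)"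

text \<open>(exp(tX)_* Y) at x (meaningful for x in slice S C X (-t)); the local function
  f o exp(tX) is replaced by a global function agreeing with it near exp(-tX) x.\<close>
definition push :: "'a set \<Rightarrow> ('a \<Rightarrow> real) set \<Rightarrow> (('a \<Rightarrow> real) \<Rightarrow> ('a \<Rightarrow> real)) \<Rightarrow> (('a \<Rightarrow> real) \<Rightarrow> ('a \<Rightarrow> real)) \<Rightarrow> real \<Rightarrow> 'a \<Rightarrow> ('a \<Rightarrow> real) \<Rightarrow> real" where
  "push S C X Y t x = (let p = flow S C X (-t) x in
     (\<lambda>f. if f \<in> C then Y (SOME g. g \<in> C \<and> (\<exists>W. openin (dtop S C) W \<and> p \<in> W \<and>
              W \<subseteq> slice S C X t \<and> (\<forall>z\<in>W. g z = f (flow S C X t z)))) p else 0))"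

definition locally_complete :: "'a set \<Rightarrow> ('a \<Rightarrow> real) set \<Rightarrow> (('a \<Rightarrow> real) \<Rightarrow> ('a \<Rightarrow> real)) set \<Rightarrow> bool" where
  "locally_complete S C F \<longleftrightarrow> (\<forall>X\<in>F. \<forall>Y\<in>F. \<forall>x t. x \<in> slice S C X (-t) \<longrightarrow>
     (\<exists>U. openin (dtop S C) U \<and> x \<in> U \<and> U \<subseteq> slice S C X (-t) \<and>
          (\<exists>Z\<in>F. \<forall>z\<in>U. push S C X Y t z = vat C Z z)))"

definition orb_tangent :: "('a \<Rightarrow> real) set \<Rightarrow> (('a \<Rightarrow> real) \<Rightarrow> ('a \<Rightarrow> real)) set \<Rightarrow> 'a \<Rightarrow> (('a \<Rightarrow> real) \<Rightarrow> real) set" where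
  "orb_tangent C A y = {v. \<exists>(m::nat) c Xs. (\<forall>i<m. Xs i \<in> A) \<and>
      v = (\<lambda>f. \<Sum>i<m. c i * vat C (Xs i) y f)}"

text \<open>Components of phi_* v in R^n: v applied to the coordinate functions of phi
  (replaced by global functions agreeing with them near y).\<close>
definition pushvec :: "'a set \<Rightarrow> ('a \<Rightarrow> real) set \<Rightarrow> 'a set \<Rightarrow> ('a \<Rightarrow> nat \<Rightarrow> real) \<Rightarrow> nat \<Rightarrow> 'a \<Rightarrow> (('a \<Rightarrow> real) \<Rightarrow> real) \<Rightarrow> nat \<Rightarrow> real" where
  "pushvec S C U \<phi> n y v = (\<lambda>i. if i < n then
      v (SOME g. g \<in> C \<and> (\<exists>W. openin (dtop S C) W \<and> y \<in> W \<and> W \<subseteq> U \<and> (\<forall>z\<in>W. g z = \<phi> z i)))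
      else 0)"

text \<open>alt k I w = coefficient of w_0 /\ ... /\ w_(k-1) at e_(I 0) (x) ... (x) e_(I (k-1)),
  i.e. the determinant of the k x k matrix (w_j (I l)).\<close>
definition alt :: "nat \<Rightarrow> (nat \<Rightarrow> nat) \<Rightarrow> (nat \<Rightarrow> nat \<Rightarrow> real) \<Rightarrow> real" where
  "alt k I w = (\<Sum>\<sigma> | \<sigma> permutes {..<k}. of_int (sign \<sigma>) * (\<Prod>j<k. w (\<sigma> j) (I j)))"

definition digits :: "nat \<Rightarrow> nat \<Rightarrow> nat \<Rightarrow> nat \<Rightarrow> nat" where
  "digits n k m = (\<lambda>l. if l < k then m div n ^ l mod n else 0)"

text \<open>Coordinates of (p, w_0 /\ ... /\ w_(k-1)) in R^n x (R^n)^(tensor k) = R^(n + n^k);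
  this embeds the bundle of k-vectors of R^n as a linear subbundle.\<close>
definition wedge_coords :: "nat \<Rightarrow> nat \<Rightarrow> (nat \<Rightarrow> real) \<Rightarrow> (nat \<Rightarrow> nat \<Rightarrow> real) \<Rightarrow> nat \<Rightarrow> real" where
  "wedge_coords n k p w = (\<lambda>j. if j < n then p j
      else if j < n + n ^ k then alt k (digits n k (j - n)) w else 0)"

definition incr :: "nat \<Rightarrow> nat \<Rightarrow> (nat \<Rightarrow> nat) set" where
  "incr n k = {I. (\<forall>j<k. I j < n) \<and> (\<forall>j. Suc j < k \<longrightarrow> I j < I (Suc j)) \<and> (\<forall>j\<ge>k. I j = 0)}"

text \<open>A smooth k-form on R^n given by its coefficients a_I, I strictly increasing.\<close>
definition diff_form :: "nat \<Rightarrow> nat \<Rightarrow> ((nat \<Rightarrow> nat) \<Rightarrow> (nat \<Rightarrow> real) \<Rightarrow> real) \<Rightarrow> bool" where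
  "diff_form n k a \<longleftrightarrow> (\<forall>I\<in>incr n k. smooth_Rn n (a I))"

definition form_eval :: "nat \<Rightarrow> nat \<Rightarrow> ((nat \<Rightarrow> nat) \<Rightarrow> (nat \<Rightarrow> real) \<Rightarrow> real) \<Rightarrow> (nat \<Rightarrow> real) \<Rightarrow> (nat \<Rightarrow> nat \<Rightarrow> real) \<Rightarrow> real" where
  "form_eval n k a p w = (\<Sum>I\<in>incr n k. a I p * alt k I w)"

definition orbital_form :: "'a set \<Rightarrow> ('a \<Rightarrow> real) set \<Rightarrow> (('a \<Rightarrow> real) \<Rightarrow> ('a \<Rightarrow> real)) set \<Rightarrow> nat \<Rightarrow>
    ('a \<Rightarrow> (nat \<Rightarrow> ('a \<Rightarrow> real) \<Rightarrow> real) \<Rightarrow> real) \<Rightarrow> bool" where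
  "orbital_form S C A k \<mu> \<longleftrightarrow>
     (\<forall>y\<in>S. (\<forall>v j u c. (\<forall>i<k. v i \<in> orb_tangent C A y) \<and> j < k \<and> u \<in> orb_tangent C A y \<longrightarrow>
                \<mu> y (v(j := (\<lambda>f. v j f + c * u f))) = \<mu> y v + c * \<mu> y (v(j := u))) \<and>
            (\<forall>v. (\<forall>i<k. v i \<in> orb_tangent C A y) \<and> (\<exists>i j. i < k \<and> j < k \<and> i \<noteq> j \<and> v i = v j)
                \<longrightarrow> \<mu> y v = 0)) \<and>
     (\<forall>x\<in>S. \<exists>U \<phi> n f. x \<in> U \<and> chart S C U \<phi> n \<and> smooth_Rn (n + n ^ k) f \<and>
        (\<forall>y\<in>U. \<forall>v. (\<forall>j<k. v j \<in> orb_tangent C A y) \<longrightarrow>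
           \<mu> y v = f (wedge_coords n k (\<phi> y) (\<lambda>j. pushvec S C U \<phi> n y (v j)))))"

end

theory Submission
  imports Defs
begin

text \<open>In a chart, \<mu> is f(\<phi> y, \<phi>_* v_1 \<and> ... \<and> \<phi>_* v_k) for a smooth f on the bundle of
  k-vectors of R^n, and multilinearity makes f homogeneous of degree one along the fibres over
  the image of the chart. Differentiating t \<mapsto> f(p, t w) at t = 0 (a chain rule for functions
  with continuous partial derivatives) writes \<mu> as a linear combination of the coordinates of w
  whose coefficients, the fibre derivatives of f at (p, 0), are smooth in p; expressing these
  coordinates in the basis of strictly increasing multi-indices gives the form.\<close>

subsection \<open>Alternating coefficients\<close>

lemma alt_cong: "(\<And>j. j < k \<Longrightarrow> J j = J' j) \<Longrightarrow> alt k J w = alt k J' w"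
  unfolding alt_def by (intro sum.cong refl) (auto intro!: prod.cong)

lemma alt_zero [simp]: "alt 0 I w = 1"
  unfolding alt_def by simp

lemma alt_comp_permutes:
  assumes s: "\<sigma> permutes {..<k}"
  shows "alt k (\<lambda>j. I (\<sigma> j)) w = of_int (sign \<sigma>) * alt k I w"
proof -
  have "alt k (\<lambda>j. I (\<sigma> j)) w = (\<Sum>\<tau> | \<tau> permutes {..<k}. of_int (sign \<tau>) * (\<Prod>l<k. w ((\<tau> \<circ> inv \<sigma>) l) (I l)))"
    unfolding alt_def
  proof (intro sum.cong refl)
    fix \<tau>
    have "(\<Prod>l<k. w ((\<tau> \<circ> inv \<sigma>) l) (I l)) = (\<Prod>j<k. w ((\<tau> \<circ> inv \<sigma>) (\<sigma> j)) (I (\<sigma> j)))"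
      using prod.permute[OF s, of "\<lambda>l. w ((\<tau> \<circ> inv \<sigma>) l) (I l)"] by (simp add: o_def)
    also have "\<dots> = (\<Prod>j<k. w (\<tau> j) (I (\<sigma> j)))"
      by (simp add: permutes_inverses[OF s])
    finally show "of_int (sign \<tau>) * (\<Prod>j<k. w (\<tau> j) (I (\<sigma> j))) =
        of_int (sign \<tau>) * (\<Prod>l<k. w ((\<tau> \<circ> inv \<sigma>) l) (I l))"
      by simp
  qed
  also have "\<dots> = (\<Sum>\<rho> | \<rho> permutes {..<k}. of_int (sign (\<rho> \<circ> \<sigma>)) * (\<Prod>l<k. w ((\<rho> \<circ> \<sigma> \<circ> inv \<sigma>) l) (I l)))"
    by (subst sum_permutations_compose_right[OF s]) simp
  also have "\<dots> = (\<Sum>\<rho> | \<rho> permutes {..<k}. of_int (sign \<sigma>) * (of_int (sign \<rho>) * (\<Prod>l<k. w (\<rho> l) (I l))))"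
  proof (intro sum.cong refl)
    fix \<rho> assume "\<rho> \<in> {\<rho>. \<rho> permutes {..<k}}"
    then have "sign (\<rho> \<circ> \<sigma>) = sign \<rho> * sign \<sigma>"
      using s by (intro sign_compose) (auto simp: permutation_permutes)
    moreover have "\<rho> \<circ> \<sigma> \<circ> inv \<sigma> = \<rho>"
      using permutes_inv_o[OF s] by (simp add: o_assoc[symmetric])
    ultimately show "of_int (sign (\<rho> \<circ> \<sigma>)) * (\<Prod>l<k. w ((\<rho> \<circ> \<sigma> \<circ> inv \<sigma>) l) (I l)) =
        of_int (sign \<sigma>) * (of_int (sign \<rho>) * (\<Prod>l<k. w (\<rho> l) (I l)))"
      by simp
  qed
  also have "\<dots> = of_int (sign \<sigma>) * alt k I w"
    unfolding alt_def by (simp add: sum_distrib_left)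
  finally show ?thesis .
qed

lemma alt_eq_0_if_repeated_index:
  assumes "a < k" "b < k" "a \<noteq> b" "I a = I b"
  shows "alt k I w = 0"
proof -
  have "alt k I w = alt k (\<lambda>j. I (Transposition.transpose a b j)) w"
    using assms by (intro alt_cong) (auto simp: Transposition.transpose_def)
  also have "\<dots> = - alt k I w"
    using assms by (subst alt_comp_permutes) (auto simp: permutes_swap_id sign_swap_id)
  finally show ?thesis by simp
qed

lemma alt_scale_first:
  assumes "0 < k"
  shows "alt k I (w(0 := (\<lambda>i. t * w 0 i))) = t * alt k I w"
  unfolding alt_def sum_distrib_left
proof (intro sum.cong refl)
  fix \<tau> assume "\<tau> \<in> {\<tau>. \<tau> permutes {..<k}}"
  then have p: "\<tau> permutes {..<k}" by simp
  define j0 where "j0 = inv \<tau> 0"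
  have j0: "j0 < k" "\<tau> j0 = 0"
    using assms permutes_inverses[OF p] permutes_inv[OF p] unfolding j0_def
    by (auto dest: permutes_in_image)
  have other: "\<tau> j \<noteq> 0" if "j \<noteq> j0" for j
    using that j0 permutes_inj[OF p] by (metis injD)
  let ?w' = "w(0 := (\<lambda>i. t * w 0 i))"
  have "(\<Prod>j<k. ?w' (\<tau> j) (I j)) = ?w' (\<tau> j0) (I j0) * (\<Prod>j\<in>{..<k}-{j0}. ?w' (\<tau> j) (I j))"
    using j0 by (subst prod.remove[of _ j0]) auto
  also have "\<dots> = t * (w (\<tau> j0) (I j0) * (\<Prod>j\<in>{..<k}-{j0}. w (\<tau> j) (I j)))"
  proof -
    have "(\<Prod>j\<in>{..<k}-{j0}. ?w' (\<tau> j) (I j)) = (\<Prod>j\<in>{..<k}-{j0}. w (\<tau> j) (I j))"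
      by (intro prod.cong refl) (simp add: other)
    then show ?thesis using j0 by simp
  qed
  also have "\<dots> = t * (\<Prod>j<k. w (\<tau> j) (I j))"
    using j0 by (subst prod.remove[of _ j0, symmetric]) auto
  finally show "of_int (sign \<tau>) * (\<Prod>j<k. ?w' (\<tau> j) (I j)) = t * (of_int (sign \<tau>) * (\<Prod>j<k. w (\<tau> j) (I j)))"
    by simp
qed

lemma finite_incr: "finite (incr n k)"
proof -
  have "incr n k \<subseteq> (\<lambda>g j. if j < k then g j else 0) ` ({..<k} \<rightarrow>\<^sub>E {..<n})"
  proof
    fix I assume I: "I \<in> incr n k"
    then have "I = (\<lambda>j. if j < k then restrict I {..<k} j else 0)"
      unfolding incr_def by (auto simp: fun_eq_iff)
    moreover have "restrict I {..<k} \<in> {..<k} \<rightarrow>\<^sub>E {..<n}"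
      using I unfolding incr_def by auto
    ultimately show "I \<in> (\<lambda>g j. if j < k then g j else 0) ` ({..<k} \<rightarrow>\<^sub>E {..<n})" by blast
  qed
  then show ?thesis by (rule finite_subset) (auto intro: finite_PiE)
qed

lemma incr_zero: "incr n 0 = {\<lambda>_. 0}"
  unfolding incr_def by (auto simp: fun_eq_iff)

lemma sort_injective_index_map:
  assumes inj: "inj_on J {..<k}" and J: "\<forall>j<k. J j < n"
  obtains I \<sigma> where "I \<in> incr n k" "\<sigma> permutes {..<k}" "\<And>j. j < k \<Longrightarrow> J j = I (\<sigma> j)"
proof -
  define L where "L = sorted_list_of_set (J ` {..<k})"
  have lenL: "length L = k"
    unfolding L_def using inj by (simp add: card_image)
  have "distinct L" "set L = J ` {..<k}"
    unfolding L_def by simp_all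
  then have bijL: "bij_betw ((!) L) {..<k} (J ` {..<k})"
    using lenL by (intro bij_betw_nth) auto
  have bijJ: "bij_betw J {..<k} (J ` {..<k})"
    using inj by (simp add: bij_betw_imageI)
  define I where "I j = (if j < k then L ! j else 0)" for j
  define \<sigma> where "\<sigma> j = (if j < k then the_inv_into {..<k} ((!) L) (J j) else j)" for j
  have "bij_betw (the_inv_into {..<k} ((!) L) \<circ> J) {..<k} {..<k}"
    using bijJ bij_betw_the_inv_into[OF bijL] by (rule bij_betw_trans)
  then have "bij_betw \<sigma> {..<k} {..<k}"
    by (rule bij_betw_cong[THEN iffD1, rotated]) (simp add: \<sigma>_def)
  then have "\<sigma> permutes {..<k}"
    by (rule bij_imp_permutes) (simp add: \<sigma>_def)
  moreover have "J j = I (\<sigma> j)" if "j < k" for j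
  proof -
    have "\<sigma> j < k" "L ! \<sigma> j = J j"
      using that f_the_inv_into_f_bij_betw[OF bijL] the_inv_into_into[OF bij_betw_imp_inj_on[OF bijL]]
      by (auto simp: \<sigma>_def bij_betw_imp_surj_on[OF bijL])
    then show ?thesis by (simp add: I_def)
  qed
  moreover have "I \<in> incr n k"
  proof -
    have "sorted_wrt (<) L" unfolding L_def by (rule strict_sorted_list_of_set)
    moreover have "L ! j < n" if "j < k" for j
    proof -
      have "L ! j \<in> J ` {..<k}" using that bij_betw_apply[OF bijL] by simp
      then show ?thesis using J by auto
    qed
    ultimately show ?thesis
      unfolding incr_def I_def using lenL by (auto simp: sorted_wrt_iff_nth_less)
  qed
  ultimately show ?thesis using that by blast
qed

lemma alt_in_span_incr:
  assumes "\<forall>j<k. J j < n"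
  obtains c where "\<And>w. alt k J w = (\<Sum>I\<in>incr n k. c I * alt k I w)"
proof (cases "inj_on J {..<k}")
  case False
  then obtain a b where "a < k" "b < k" "a \<noteq> b" "J a = J b"
    unfolding inj_on_def by auto
  then show ?thesis
    using alt_eq_0_if_repeated_index that[of "\<lambda>_. 0"] by simp
next
  case True
  obtain I \<sigma> where I: "I \<in> incr n k" "\<sigma> permutes {..<k}" "\<And>j. j < k \<Longrightarrow> J j = I (\<sigma> j)"
    using sort_injective_index_map[OF True assms] by blast
  have "alt k J w = of_int (sign \<sigma>) * alt k I w" for w
    using alt_cong[of k J "\<lambda>j. I (\<sigma> j)"] alt_comp_permutes[OF I(2)] I(3) by simp
  moreover have "(\<Sum>I'\<in>incr n k. (if I' = I then s else 0) * alt k I' w) = s * alt k I w" for s w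
    by (subst sum.remove[OF finite_incr I(1)]) (simp add: sum.neutral)
  ultimately show ?thesis
    using that[of "\<lambda>I'. if I' = I then of_int (sign \<sigma>) else 0"] by simp
qed

subsection \<open>Smooth functions on R^n\<close>

definition has_partial_derivative ::
    "nat \<Rightarrow> ((nat \<Rightarrow> real) \<Rightarrow> real) \<Rightarrow> nat \<Rightarrow> ((nat \<Rightarrow> real) \<Rightarrow> real) \<Rightarrow> bool" where
  "has_partial_derivative n g i D \<longleftrightarrow>
     (\<forall>x\<in>Rn n. ((\<lambda>t. g (x(i := x i + t))) has_real_derivative D x) (at 0))"

lemma smooth_Rn_continuous_on: "smooth_Rn n g \<Longrightarrow> continuous_on (Rn n) g"
  by (erule smooth_Rn.cases) simp

lemma smooth_Rn_partial:
  assumes "smooth_Rn n g" "i < n"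
  obtains D where "has_partial_derivative n g i D" "smooth_Rn n D"
  using assms unfolding has_partial_derivative_def by (cases rule: smooth_Rn.cases) auto

lemma smooth_Rn_lincomb:
  assumes "smooth_Rn n f" "smooth_Rn n g"
  shows "smooth_Rn n (\<lambda>x. c * f x + d * g x)"
proof -
  define X where "X h \<longleftrightarrow> (\<exists>c d f g. smooth_Rn n f \<and> smooth_Rn n g \<and> h = (\<lambda>x. c * f x + d * g x))" for h
  have "X (\<lambda>x. c * f x + d * g x)" unfolding X_def using assms by blast
  then show ?thesis
  proof (coinduct rule: smooth_Rn.coinduct[of X])
    case (smooth_Rn h)
    then obtain c d f g where fg: "smooth_Rn n f" "smooth_Rn n g" "h = (\<lambda>x. c * f x + d * g x)"
      unfolding X_def by blast
    have "continuous_on (Rn n) h"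
      unfolding fg(3) using smooth_Rn_continuous_on[OF fg(1)] smooth_Rn_continuous_on[OF fg(2)]
      by (intro continuous_intros)
    moreover have "\<exists>D. (\<forall>x\<in>Rn n. ((\<lambda>t. h (x(i := x i + t))) has_real_derivative D x) (at 0)) \<and>
        (X D \<or> smooth_Rn n D)" if i: "i < n" for i
    proof -
      obtain Df Dg where "has_partial_derivative n f i Df" "smooth_Rn n Df"
        and "has_partial_derivative n g i Dg" "smooth_Rn n Dg"
        using smooth_Rn_partial[OF fg(1) i] smooth_Rn_partial[OF fg(2) i] by metis
      then have "((\<lambda>t. h (x(i := x i + t))) has_real_derivative c * Df x + d * Dg x) (at 0)"
        if "x \<in> Rn n" for x
        using that unfolding fg(3) has_partial_derivative_def by (intro DERIV_add DERIV_cmult) auto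
      moreover have "X (\<lambda>x. c * Df x + d * Dg x)"
        unfolding X_def using \<open>smooth_Rn n Df\<close> \<open>smooth_Rn n Dg\<close>
        by (intro exI[of _ c] exI[of _ d] exI[of _ Df] exI[of _ Dg]) simp
      ultimately show ?thesis by (intro exI[of _ "\<lambda>x. c * Df x + d * Dg x"]) simp
    qed
    ultimately show ?case by blast
  qed
qed

lemma smooth_Rn_zero: "smooth_Rn n (\<lambda>_. 0)"
  by (coinduct rule: smooth_Rn.coinduct[of "\<lambda>h. h = (\<lambda>_. 0)"]) (auto intro!: exI[of _ "\<lambda>_. 0"])

lemma smooth_Rn_sum:
  assumes "finite A" "\<And>i. i \<in> A \<Longrightarrow> smooth_Rn n (g i)"
  shows "smooth_Rn n (\<lambda>x. \<Sum>i\<in>A. c i * g i x)"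
  using assms
proof (induction A rule: finite_induct)
  case empty
  then show ?case by (simp add: smooth_Rn_zero)
next
  case (insert a A)
  then have "smooth_Rn n (\<lambda>x. c a * g a x + 1 * (\<Sum>i\<in>A. c i * g i x))"
    by (intro smooth_Rn_lincomb) auto
  with insert(1,2) show ?case by simp
qed

definition pad :: "nat \<Rightarrow> (nat \<Rightarrow> real) \<Rightarrow> (nat \<Rightarrow> real) \<Rightarrow> nat \<Rightarrow> real" where
  "pad n c p = (\<lambda>j. if j < n then p j else c j)"

lemma pad_in_Rn: "n \<le> N \<Longrightarrow> c \<in> Rn N \<Longrightarrow> pad n c p \<in> Rn N"
  unfolding pad_def Rn_def by auto

lemma continuous_on_pad: "continuous_on UNIV (pad n c)"
proof (intro continuous_on_coordinatewise_then_product)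
  fix i
  show "continuous_on UNIV (\<lambda>p. pad n c p i)"
    by (cases "i < n") (simp_all add: pad_def)
qed

lemma smooth_Rn_pad:
  assumes "smooth_Rn N g" "n \<le> N" "c \<in> Rn N"
  shows "smooth_Rn n (\<lambda>p. g (pad n c p))"
proof -
  define X where "X h \<longleftrightarrow> (\<exists>g. smooth_Rn N g \<and> h = (\<lambda>p. g (pad n c p)))" for h
  have "X (\<lambda>p. g (pad n c p))" unfolding X_def using assms by blast
  then show ?thesis
  proof (coinduct rule: smooth_Rn.coinduct[of X])
    case (smooth_Rn h)
    then obtain g where g: "smooth_Rn N g" "h = (\<lambda>p. g (pad n c p))"
      unfolding X_def by blast
    have "continuous_on (Rn n) h"
      unfolding g(2) using smooth_Rn_continuous_on[OF g(1)] pad_in_Rn[OF assms(2,3)]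
      by (intro continuous_on_compose2[OF _ continuous_on_subset[OF continuous_on_pad]]) auto
    moreover have "\<exists>D. (\<forall>x\<in>Rn n. ((\<lambda>t. h (x(i := x i + t))) has_real_derivative D x) (at 0)) \<and>
        (X D \<or> smooth_Rn n D)" if i: "i < n" for i
    proof -
      obtain Dg where "has_partial_derivative N g i Dg" "smooth_Rn N Dg"
        using smooth_Rn_partial[OF g(1)] i assms(2) by (metis less_le_trans)
      moreover have "pad n c (x(i := x i + t)) = (pad n c x)(i := pad n c x i + t)" for x t
        using i unfolding pad_def by (auto simp: fun_eq_iff)
      moreover have "X (\<lambda>x. Dg (pad n c x))"
        unfolding X_def using \<open>smooth_Rn N Dg\<close> by (intro exI[of _ Dg]) simp
      ultimately show ?thesis
        unfolding g(2) has_partial_derivative_def using pad_in_Rn[OF assms(2,3)]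
        by (intro exI[of _ "\<lambda>x. Dg (pad n c x)"]) auto
    qed
    ultimately show ?case by blast
  qed
qed

subsection \<open>A chain rule for partial derivatives\<close>

lemma MVT_symmetric:
  fixes h :: "real \<Rightarrow> real"
  assumes "\<And>s. (h has_real_derivative h' s) (at s)"
  obtains \<xi> where "\<bar>\<xi>\<bar> \<le> \<bar>r\<bar>" "h r - h 0 = r * h' \<xi>"
proof -
  consider "r = 0" | "0 < r" | "r < 0" by linarith
  then show ?thesis
  proof cases
    case 1
    then show ?thesis using that[of 0] by simp
  next
    case 2
    with MVT2[of 0 r h h'] assms obtain z where "0 < z" "z < r" "h r - h 0 = (r - 0) * h' z" by blast
    then show ?thesis using that[of z] by simp
  next
    case 3
    with MVT2[of r 0 h h'] assms obtain z where "r < z" "z < 0" "h 0 - h r = (0 - r) * h' z" by blast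
    then show ?thesis using that[of z] by simp
  qed
qed

lemma DERIV_add_mult_tendsto:
  fixes F G H :: "real \<Rightarrow> real"
  assumes "(G has_real_derivative g) (at 0)" "(H \<longlongrightarrow> h) (at 0)" "\<And>t. F t = G t + t * H t"
  shows "(F has_real_derivative g + h) (at 0)"
proof -
  have "((\<lambda>t. (G t - G 0) / t + H t) \<longlongrightarrow> g + h) (at 0)"
    using assms(1,2) unfolding has_field_derivative_iff by (intro tendsto_add) simp_all
  moreover have "\<forall>\<^sub>F t in at 0. (G t - G 0) / t + H t = (F t - F 0) / t"
    unfolding eventually_at_filter using assms(3) by (simp add: field_simps)
  ultimately show ?thesis
    unfolding has_field_derivative_iff by (simp add: tendsto_cong)
qed

lemma DERIV_coordinate_shift:
  assumes "has_partial_derivative n g i D" "x \<in> Rn n" "i < n"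
  shows "((\<lambda>s. g (x(i := x i + s))) has_real_derivative D (x(i := x i + s))) (at s)"
proof -
  have "x(i := x i + s) \<in> Rn n" using assms(2,3) unfolding Rn_def by auto
  with assms(1) have "((\<lambda>t. g ((x(i := x i + s))(i := x i + s + t))) has_real_derivative
      D (x(i := x i + s))) (at 0)"
    unfolding has_partial_derivative_def by fastforce
  then have "((\<lambda>t. g (x(i := x i + (t + s)))) has_real_derivative D (x(i := x i + s))) (at 0)"
    by (simp add: ac_simps)
  then show ?thesis using DERIV_shift[of "\<lambda>s. g (x(i := x i + s))" _ 0 s] by simp
qed

lemma partial_increment_MVT:
  assumes "has_partial_derivative N f i Di" "y \<in> Rn N" "i < N"
  obtains \<xi> where "\<bar>\<xi>\<bar> \<le> \<bar>r\<bar>" "f (y(i := y i + r)) = f y + r * Di (y(i := y i + \<xi>))"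
proof -
  obtain \<xi> where "\<bar>\<xi>\<bar> \<le> \<bar>r\<bar>" "f (y(i := y i + r)) - f (y(i := y i + 0)) = r * Di (y(i := y i + \<xi>))"
    by (rule MVT_symmetric[OF DERIV_coordinate_shift[OF assms]])
  then show ?thesis using that by simp
qed

lemma tendsto_affine_update:
  fixes \<xi> :: "real \<Rightarrow> real"
  assumes "(\<xi> \<longlongrightarrow> 0) (at 0)"
  shows "((\<lambda>t. (\<lambda>j. x j + t * E j)(m := x m + \<xi> t)) \<longlongrightarrow> x) (at 0)"
proof -
  define \<Phi> where "\<Phi> = (\<lambda>(t, s). (\<lambda>j. x j + t * E j)(m := x m + s))"
  have "continuous_on UNIV \<Phi>"
  proof (intro continuous_on_coordinatewise_then_product)
    fix j
    show "continuous_on UNIV (\<lambda>p. \<Phi> p j)"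
      by (cases "j = m") (auto simp: \<Phi>_def case_prod_beta intro!: continuous_intros)
  qed
  then have "((\<lambda>t. \<Phi> (t, \<xi> t)) \<longlongrightarrow> \<Phi> (0, 0)) (at 0)"
    using assms by (intro isCont_tendsto_compose[of _ \<Phi>] tendsto_Pair tendsto_ident_at)
      (simp_all add: continuous_on_eq_continuous_at)
  then show ?thesis by (simp add: \<Phi>_def)
qed

lemma DERIV_directional_eq_sum_partials:
  assumes "\<And>i. i < m \<Longrightarrow> has_partial_derivative N f i (D i)"
    and "\<And>i. i < m \<Longrightarrow> continuous_on (Rn N) (D i)"
    and "m \<le> N" "x \<in> Rn N" "E \<in> Rn m"
  shows "((\<lambda>t. f (\<lambda>j. x j + t * E j)) has_real_derivative (\<Sum>i<m. E i * D i x)) (at 0)"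
  using assms
proof (induction m arbitrary: E)
  case 0
  then have "E = (\<lambda>_. 0)" unfolding Rn_def by auto
  then show ?case by simp
next
  case (Suc m)
  define y where "y t = (\<lambda>j. x j + t * (E(m := 0)) j)" for t
  have m: "m < N" using Suc.prems(3) by simp
  have y_Rn: "(y t)(m := s) \<in> Rn N" for t s
    using Suc.prems(3-5) m unfolding y_def Rn_def by auto
  have "((\<lambda>t. f (y t)) has_real_derivative (\<Sum>i<m. (E(m := 0)) i * D i x)) (at 0)"
    unfolding y_def using Suc.prems(3,5) by (intro Suc.IH Suc.prems(1,2,4)) (auto simp: Rn_def)
  moreover have "(\<Sum>i<m. (E(m := 0)) i * D i x) = (\<Sum>i<m. E i * D i x)"
    by (intro sum.cong) auto
  ultimately have IH: "((\<lambda>t. f (y t)) has_real_derivative (\<Sum>i<m. E i * D i x)) (at 0)"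
    by simp
  text \<open>Changing the last coordinate costs t E_m times the partial derivative at an
    intermediate point, which tends to x with t.\<close>
  have "\<exists>\<xi>. \<bar>\<xi>\<bar> \<le> \<bar>t * E m\<bar> \<and>
      f (\<lambda>j. x j + t * E j) = f (y t) + t * (E m * D m ((y t)(m := x m + \<xi>)))" for t
  proof -
    have "y t \<in> Rn N" using y_Rn[of t "y t m"] by simp
    then obtain \<xi> where \<xi>: "\<bar>\<xi>\<bar> \<le> \<bar>t * E m\<bar>"
      and incr: "f ((y t)(m := y t m + t * E m)) = f (y t) + t * E m * D m ((y t)(m := y t m + \<xi>))"
      by (rule partial_increment_MVT[OF Suc.prems(1)[OF lessI] _ m])
    have "(y t)(m := y t m + t * E m) = (\<lambda>j. x j + t * E j)" "y t m = x m"
      by (auto simp: y_def)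
    with incr have "f (\<lambda>j. x j + t * E j) = f (y t) + t * (E m * D m ((y t)(m := x m + \<xi>)))"
      by (simp only: mult.assoc)
    with \<xi> show ?thesis by blast
  qed
  then obtain \<xi> where \<xi>: "\<And>t. \<bar>\<xi> t\<bar> \<le> \<bar>t * E m\<bar>"
    and decomp: "\<And>t. f (\<lambda>j. x j + t * E j) = f (y t) + t * (E m * D m ((y t)(m := x m + \<xi> t)))"
    by metis
  have "(\<xi> \<longlongrightarrow> 0) (at 0)"
  proof (rule Lim_null_comparison)
    show "\<forall>\<^sub>F t in at 0. norm (\<xi> t) \<le> \<bar>t * E m\<bar>" using \<xi> by simp
    show "((\<lambda>t. \<bar>t * E m\<bar>) \<longlongrightarrow> 0) (at 0)"
      by (intro tendsto_rabs_zero tendsto_mult_left_zero tendsto_ident_at)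
  qed
  then have "((\<lambda>t. (y t)(m := x m + \<xi> t)) \<longlongrightarrow> x) (at 0)"
    unfolding y_def by (rule tendsto_affine_update)
  then have "((\<lambda>t. D m ((y t)(m := x m + \<xi> t))) \<longlongrightarrow> D m x) (at 0)"
    by (rule continuous_on_tendsto_compose[OF Suc.prems(2)[OF lessI] _ Suc.prems(4)]) (simp add: y_Rn)
  then have "((\<lambda>t. f (\<lambda>j. x j + t * E j)) has_real_derivative (\<Sum>i<m. E i * D i x) + E m * D m x) (at 0)"
    by (intro DERIV_add_mult_tendsto[OF IH _ decomp] tendsto_mult_left)
  then show ?case by simp
qed

subsection \<open>Fibrewise linear functions on the bundle of k-vectors\<close>

lemma wedge_coords_scale_first:
  assumes "0 < k"
  shows "wedge_coords n k p (w(0 := (\<lambda>i. t * w 0 i))) =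
    (\<lambda>j. pad n (\<lambda>_. 0) p j + t * wedge_coords n k (\<lambda>_. 0) w j)"
  using assms by (auto simp: fun_eq_iff wedge_coords_def pad_def alt_scale_first)

lemma smooth_Rn_wedge_coords_zero_form:
  assumes "smooth_Rn (n + n ^ 0) f"
  obtains a where "diff_form n 0 a" "\<And>p w. f (wedge_coords n 0 p w) = form_eval n 0 a p w"
proof -
  define c :: "nat \<Rightarrow> real" where "c j = (if j = n then 1 else 0)" for j
  define a where "a I p = f (pad n c p)" for I :: "nat \<Rightarrow> nat" and p
  have "c \<in> Rn (n + n ^ 0)" by (simp add: c_def Rn_def)
  then have "diff_form n 0 a"
    unfolding diff_form_def a_def using smooth_Rn_pad[OF assms le_add1] by blast
  moreover have "f (wedge_coords n 0 p w) = form_eval n 0 a p w" for p w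
  proof -
    have "wedge_coords n 0 p w = pad n c p"
      by (auto simp: fun_eq_iff wedge_coords_def pad_def c_def)
    then show ?thesis by (simp add: form_eval_def incr_zero a_def)
  qed
  ultimately show ?thesis by (rule that)
qed

lemma alt_digits_in_span_incr:
  obtains c where "\<And>m w. m < n ^ k \<Longrightarrow> alt k (digits n k m) w = (\<Sum>I\<in>incr n k. c m I * alt k I w)"
proof -
  have "\<exists>cm. \<forall>w. alt k (digits n k m) w = (\<Sum>I\<in>incr n k. cm I * alt k I w)" if "m < n ^ k" for m
  proof -
    have "\<forall>j<k. digits n k m j < n"
      using that by (cases n) (auto simp: digits_def power_0_left)
    then show ?thesis by (rule alt_in_span_incr) blast
  qed
  then show ?thesis using that by metis
qed

lemma DERIV_wedge_coords_fibre:
  assumes "\<And>i. i < n + n ^ k \<Longrightarrow> has_partial_derivative (n + n ^ k) f i (D i)"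
    and "\<And>i. i < n + n ^ k \<Longrightarrow> continuous_on (Rn (n + n ^ k)) (D i)"
  shows "((\<lambda>t. f (\<lambda>j. pad n (\<lambda>_. 0) p j + t * wedge_coords n k (\<lambda>_. 0) w j)) has_real_derivative
    (\<Sum>m<n ^ k. alt k (digits n k m) w * D (n + m) (pad n (\<lambda>_. 0) p))) (at 0)"
proof -
  define x where "x = pad n (\<lambda>_. 0) p"
  define E where "E = wedge_coords n k (\<lambda>_. 0) w"
  have "x \<in> Rn (n + n ^ k)" "E \<in> Rn (n + n ^ k)"
    by (auto simp: x_def E_def Rn_def pad_def wedge_coords_def)
  then have "((\<lambda>t. f (\<lambda>j. x j + t * E j)) has_real_derivative (\<Sum>i<n + n ^ k. E i * D i x)) (at 0)"
    using assms by (intro DERIV_directional_eq_sum_partials) auto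
  moreover have "(\<Sum>i<n + q. E i * D i x) = (\<Sum>m<q. E (n + m) * D (n + m) x)" for q
    by (induction q) (simp_all add: E_def wedge_coords_def)
  moreover have "(\<Sum>m<n ^ k. E (n + m) * D (n + m) x) = (\<Sum>m<n ^ k. alt k (digits n k m) w * D (n + m) x)"
    by (intro sum.cong refl) (simp add: E_def wedge_coords_def)
  ultimately show ?thesis by (simp add: x_def E_def)
qed

lemma smooth_Rn_homogeneous_is_form:
  assumes f: "smooth_Rn (n + n ^ k) f" and k: "0 < k"
  obtains a where "diff_form n k a"
    and "\<And>p w L. (\<And>t. f (wedge_coords n k p (w(0 := (\<lambda>i. t * w 0 i)))) = t * L) \<Longrightarrow>
      L = form_eval n k a p w"
proof -
  have "\<forall>i. \<exists>Di. i < n + n ^ k \<longrightarrow> has_partial_derivative (n + n ^ k) f i Di \<and> smooth_Rn (n + n ^ k) Di"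
    using smooth_Rn_partial[OF f] by metis
  then obtain D where D: "\<And>i. i < n + n ^ k \<Longrightarrow>
      has_partial_derivative (n + n ^ k) f i (D i) \<and> smooth_Rn (n + n ^ k) (D i)"
    by metis
  obtain c where c: "\<And>m w. m < n ^ k \<Longrightarrow> alt k (digits n k m) w = (\<Sum>I\<in>incr n k. c m I * alt k I w)"
    using alt_digits_in_span_incr[of n k] by blast
  define a where "a I p = (\<Sum>m<n ^ k. c m I * D (n + m) (pad n (\<lambda>_. 0) p))" for I p
  have "diff_form n k a"
    unfolding diff_form_def a_def
  proof (intro ballI smooth_Rn_sum)
    fix m assume "m \<in> {..<n ^ k}"
    then show "smooth_Rn n (\<lambda>p. D (n + m) (pad n (\<lambda>_. 0) p))"
      using D[of "n + m"] by (intro smooth_Rn_pad) (auto simp: Rn_def)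
  qed simp
  moreover have "L = form_eval n k a p w"
    if hom: "\<And>t. f (wedge_coords n k p (w(0 := (\<lambda>i. t * w 0 i)))) = t * L" for p w L
  proof -
    let ?x = "pad n (\<lambda>_. 0) p"
    have "((\<lambda>t. f (\<lambda>j. ?x j + t * wedge_coords n k (\<lambda>_. 0) w j)) has_real_derivative L) (at 0)"
      using hom DERIV_cmult_right[OF DERIV_ident, of L 0]
      by (simp add: wedge_coords_scale_first[OF k, symmetric])
    moreover have "((\<lambda>t. f (\<lambda>j. ?x j + t * wedge_coords n k (\<lambda>_. 0) w j)) has_real_derivative
        (\<Sum>m<n ^ k. alt k (digits n k m) w * D (n + m) ?x)) (at 0)"
      using D smooth_Rn_continuous_on by (intro DERIV_wedge_coords_fibre) auto
    ultimately have "L = (\<Sum>m<n ^ k. alt k (digits n k m) w * D (n + m) ?x)"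
      by (rule DERIV_unique)
    also have "\<dots> = (\<Sum>m<n ^ k. \<Sum>I\<in>incr n k. c m I * alt k I w * D (n + m) ?x)"
      by (intro sum.cong refl) (simp add: c sum_distrib_right)
    also have "\<dots> = (\<Sum>I\<in>incr n k. a I p * alt k I w)"
      unfolding a_def sum_distrib_right by (subst sum.swap) (simp add: ac_simps)
    finally show ?thesis unfolding form_eval_def .
  qed
  ultimately show ?thesis by (rule that)
qed

subsection \<open>Orbital forms\<close>

lemma openin_dtop_subset: "openin (dtop S C) U \<Longrightarrow> U \<subseteq> S"
  unfolding dtop_def using openin_subset by fastforce

lemma orb_tangent_scale:
  assumes "u \<in> orb_tangent C A y"
  shows "(\<lambda>f. t * u f) \<in> orb_tangent C A y"
proof -
  obtain m c Xs where Xs: "\<forall>i<m. Xs i \<in> A"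
    and u: "u = (\<lambda>f. \<Sum>i<(m::nat). c i * vat C (Xs i) y f)"
    using assms unfolding orb_tangent_def by blast
  have "(\<lambda>f. t * u f) = (\<lambda>f. \<Sum>i<m. (t * c i) * vat C (Xs i) y f)"
    unfolding u by (simp add: sum_distrib_left mult.assoc)
  then show ?thesis
    unfolding orb_tangent_def using Xs by (intro CollectI exI conjI)
qed

lemma pushvec_scale: "pushvec S C U \<phi> n y (\<lambda>f. t * u f) = (\<lambda>i. t * pushvec S C U \<phi> n y u i)"
  unfolding pushvec_def by (simp add: fun_eq_iff)

lemma orbital_form_scale_first:
  assumes "orbital_form S C A k \<mu>" "y \<in> S" "0 < k" "\<forall>i<k. v i \<in> orb_tangent C A y"
  shows "\<mu> y (v(0 := (\<lambda>f. t * v 0 f))) = t * \<mu> y v"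
proof -
  have "\<mu> y (v(0 := (\<lambda>f. v 0 f + (t - 1) * v 0 f))) = \<mu> y v + (t - 1) * \<mu> y (v(0 := v 0))"
    using assms unfolding orbital_form_def by blast
  moreover have "(\<lambda>f. v 0 f + (t - 1) * v 0 f) = (\<lambda>f. t * v 0 f)"
    by (simp add: fun_eq_iff algebra_simps)
  ultimately show ?thesis by (simp add: algebra_simps)
qed

lemma orbital_form_chartE:
  assumes "orbital_form S C A k \<mu>" "x \<in> S"
  obtains U \<phi> n f where "x \<in> U" "chart S C U \<phi> n" "smooth_Rn (n + n ^ k) f"
    "\<forall>y\<in>U. \<forall>v. (\<forall>j<k. v j \<in> orb_tangent C A y) \<longrightarrow>
      \<mu> y v = f (wedge_coords n k (\<phi> y) (\<lambda>j. pushvec S C U \<phi> n y (v j)))"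
proof -
  have "\<forall>x\<in>S. \<exists>U \<phi> n f. x \<in> U \<and> chart S C U \<phi> n \<and> smooth_Rn (n + n ^ k) f \<and>
      (\<forall>y\<in>U. \<forall>v. (\<forall>j<k. v j \<in> orb_tangent C A y) \<longrightarrow>
        \<mu> y v = f (wedge_coords n k (\<phi> y) (\<lambda>j. pushvec S C U \<phi> n y (v j))))"
    using assms(1) unfolding orbital_form_def by (rule conjunct2)
  from bspec[OF this assms(2)] show ?thesis
    using that by (elim exE conjE)
qed

lemma orbital_form_chart_homogeneous:
  assumes "orbital_form S C A k \<mu>" "y \<in> S" "0 < k" "\<forall>j<k. v j \<in> orb_tangent C A y"
    and \<mu>_f: "\<forall>v. (\<forall>j<k. v j \<in> orb_tangent C A y) \<longrightarrow>
      \<mu> y v = f (wedge_coords n k (\<phi> y) (\<lambda>j. pushvec S C U \<phi> n y (v j)))"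
  defines "W \<equiv> \<lambda>j. pushvec S C U \<phi> n y (v j)"
  shows "f (wedge_coords n k (\<phi> y) (W(0 := (\<lambda>i. t * W 0 i)))) = t * \<mu> y v"
proof -
  let ?v = "v(0 := (\<lambda>f. t * v 0 f))"
  have "\<forall>j<k. ?v j \<in> orb_tangent C A y"
    using assms(3,4) by (simp add: orb_tangent_scale)
  moreover have "(\<lambda>j. pushvec S C U \<phi> n y (?v j)) = W(0 := (\<lambda>i. t * W 0 i))"
    by (simp add: W_def fun_eq_iff pushvec_scale)
  ultimately have "\<mu> y ?v = f (wedge_coords n k (\<phi> y) (W(0 := (\<lambda>i. t * W 0 i))))"
    using \<mu>_f by simp
  moreover have "\<mu> y ?v = t * \<mu> y v"
    by (rule orbital_form_scale_first[OF assms(1-4)])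
  ultimately show ?thesis by simp
qed

lemma orbital_form_chart_pullback:
  assumes "orbital_form S C A k \<mu>" "U \<subseteq> S" "smooth_Rn (n + n ^ k) f"
    and "\<forall>y\<in>U. \<forall>v. (\<forall>j<k. v j \<in> orb_tangent C A y) \<longrightarrow>
      \<mu> y v = f (wedge_coords n k (\<phi> y) (\<lambda>j. pushvec S C U \<phi> n y (v j)))"
  obtains a where "diff_form n k a" "\<forall>y\<in>U. \<forall>v. (\<forall>j<k. v j \<in> orb_tangent C A y) \<longrightarrow>
      \<mu> y v = form_eval n k a (\<phi> y) (\<lambda>j. pushvec S C U \<phi> n y (v j))"
proof (cases "k = 0")
  case True
  with assms(3) obtain a where "diff_form n 0 a" "\<And>p w. f (wedge_coords n 0 p w) = form_eval n 0 a p w"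
    using smooth_Rn_wedge_coords_zero_form by auto
  with True assms(4) show ?thesis using that[of a] by simp
next
  case False
  then have k: "0 < k" by simp
  obtain a where a: "diff_form n k a" and hom: "\<And>p w L.
    (\<And>t. f (wedge_coords n k p (w(0 := (\<lambda>i. t * w 0 i)))) = t * L) \<Longrightarrow> L = form_eval n k a p w"
    using smooth_Rn_homogeneous_is_form[OF assms(3) k] by blast
  have "\<mu> y v = form_eval n k a (\<phi> y) (\<lambda>j. pushvec S C U \<phi> n y (v j))"
    if "y \<in> U" "\<forall>j<k. v j \<in> orb_tangent C A y" for y v
    using that assms(2,4)
    by (intro hom orbital_form_chart_homogeneous[OF assms(1) _ k]) auto
  with a show ?thesis using that[of a] by simp
qed

theorem lemmal:
  fixes S :: "'a set" and C :: "('a \<Rightarrow> real) set"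
    and A :: "(('a \<Rightarrow> real) \<Rightarrow> ('a \<Rightarrow> real)) set"
    and \<mu> :: "'a \<Rightarrow> (nat \<Rightarrow> ('a \<Rightarrow> real) \<Rightarrow> real) \<Rightarrow> real" and k :: nat
  assumes "subcartesian S C"
    and "lie_subalgebra S C A"
    and "locally_complete S C A"
    and "orbital_form S C A k \<mu>"
  shows "\<forall>x\<in>S. \<exists>V \<phi> n a. x \<in> V \<and> chart S C V \<phi> n \<and> diff_form n k a \<and>
           (\<forall>y\<in>V. \<forall>v. (\<forall>j<k. v j \<in> orb_tangent C A y) \<longrightarrow>
              \<mu> y v = form_eval n k a (\<phi> y) (\<lambda>j. pushvec S C V \<phi> n y (v j)))"
proof
  fix x assume "x \<in> S"
  obtain U \<phi> n f where U: "x \<in> U" "chart S C U \<phi> n" and f: "smooth_Rn (n + n ^ k) f"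
    and \<mu>_f: "\<forall>y\<in>U. \<forall>v. (\<forall>j<k. v j \<in> orb_tangent C A y) \<longrightarrow>
      \<mu> y v = f (wedge_coords n k (\<phi> y) (\<lambda>j. pushvec S C U \<phi> n y (v j)))"
    using orbital_form_chartE[OF assms(4) \<open>x \<in> S\<close>] by blast
  have "U \<subseteq> S" using U(2) openin_dtop_subset unfolding chart_def by blast
  obtain a where "diff_form n k a" and "\<forall>y\<in>U. \<forall>v. (\<forall>j<k. v j \<in> orb_tangent C A y) \<longrightarrow>
      \<mu> y v = form_eval n k a (\<phi> y) (\<lambda>j. pushvec S C U \<phi> n y (v j))"
    using orbital_form_chart_pullback[OF assms(4) \<open>U \<subseteq> S\<close> f \<mu>_f] by blast
  with U show "\<exists>V \<phi> n a. x \<in> V \<and> chart S C V \<phi> n \<and> diff_form n k a \<and>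
      (\<forall>y\<in>V. \<forall>v. (\<forall>j<k. v j \<in> orb_tangent C A y) \<longrightarrow>
        \<mu> y v = form_eval n k a (\<phi> y) (\<lambda>j. pushvec S C V \<phi> n y (v j)))"
    by (intro exI[of _ U] exI[of _ \<phi>] exI[of _ n] exI[of _ a]) simp
qed

end
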